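(* Let $p$ be a prime, $k \geq 1$, $d = p^k$, and let $\Omega$ be a set with $d$ elements, $S_d = \mathrm{Aut}(\Omega)$. Let $G \subset S_d$ be a primitive solvable subgroup. Then every element $g \in G$ with $g \neq 1_G$ has at most $p^{k-1}$ fixed points on $\Omega$, i.e. $\#\{x \in \Omega : gx = x\} \leq p^{k-1}$.
   Context: A subgroup $G \subset \mathrm{Aut}(\Omega)$ is primitive if it is transitive and the stabilizer $G_x$ of a point $x\in\Omega$ is a maximal subgroup of $G$. *)

theory Defs
  imports "HOL-Algebra.Group_Action" "HOL-Algebra.Solvable_Groups" "HOL-Computational_Algebra.Primes"
begin

definition maximal_subgroup :: "'a set \<Rightarrow> ('a, 'b) monoid_scheme \<Rightarrow> bool" where
  "maximal_subgroup M G \<longleftrightarrow>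
     subgroup M G \<and> M \<noteq> carrier G \<and>
     (\<forall>K. subgroup K G \<and> M \<subseteq> K \<longrightarrow> K = M \<or> K = carrier G)"

definition perm_subgroup :: "'a set \<Rightarrow> ('a \<Rightarrow> 'a) set \<Rightarrow> ('a \<Rightarrow> 'a) monoid" where
  "perm_subgroup \<Omega> H = (BijGroup \<Omega>)\<lparr>carrier := H\<rparr>"

definition primitive :: "'a set \<Rightarrow> ('a \<Rightarrow> 'a) set \<Rightarrow> bool" where
  "primitive \<Omega> H \<longleftrightarrow>
     subgroup H (BijGroup \<Omega>) \<and>
     (\<forall>x\<in>\<Omega>. \<forall>y\<in>\<Omega>. \<exists>g\<in>H. g x = y) \<and>
     (\<forall>x\<in>\<Omega>. maximal_subgroup (stabilizer (perm_subgroup \<Omega> H) (\<lambda>g. g) x) (perm_subgroup \<Omega> H))"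

end

theory Submission
  imports Defs "HOL-Algebra.Zassenhaus"
begin

(* A solvable group G <> 1 has a nontrivial abelian normal subgroup A, the last nontrivial
   term of its derived series. Primitivity makes A transitive: A G_x is a subgroup between the
   maximal subgroup G_x and G, and A <= G_x would force the normal subgroup A to fix every point.
   An abelian transitive group is regular, so a |-> a x is a bijection from A onto Omega and
   |A| = p^k. If g fixes x, this bijection carries the centralizer C_A(g) onto the fixed points
   of g, and C_A(g) is a proper subgroup of A because g <> 1. Hence the number of fixed points
   is a proper divisor of p^k, so at most p^(k-1). *)

lemma proper_dvd_prime_power_le:
  fixes p k d :: nat
  assumes "prime p" and "d dvd p ^ k" and "d \<noteq> p ^ k"
  shows "d \<le> p ^ (k - 1)"
proof -
  obtain i where "i \<le> k" and d: "d = p ^ i"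
    using assms(1,2) divides_primepow_nat by blast
  with assms(3) have "i \<noteq> k" by auto
  with \<open>i \<le> k\<close> have "i \<le> k - 1" by linarith
  then show ?thesis
    unfolding d using assms(1) power_increasing prime_ge_1_nat by blast
qed

lemma (in group) commute_if_derived_trivial:
  assumes "H \<subseteq> carrier G" and "derived G H = {\<one>}" and "a \<in> H" and "b \<in> H"
  shows "a \<otimes> b = b \<otimes> a"
proof -
  have carr: "a \<in> carrier G" "b \<in> carrier G" using assms by auto
  have "a \<otimes> b \<otimes> inv a \<otimes> inv b \<in> derived G H"
    unfolding derived_def using assms(3,4) by (blast intro: generate.incl)
  then have "a \<otimes> b \<otimes> inv a \<otimes> inv b = \<one>" using assms(2) by simp
  then have "a \<otimes> b \<otimes> inv a = b" using carr by (simp add: inv_solve_right')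
  then show ?thesis using carr by (simp add: inv_solve_right')
qed

lemma (in group) solvable_imp_abelian_normal_subgroup:
  assumes "solvable G" and "carrier G \<noteq> {\<one>}"
  obtains A where "A \<lhd> G" and "A \<noteq> {\<one>}" and "\<And>a b. a \<in> A \<Longrightarrow> b \<in> A \<Longrightarrow> a \<otimes> b = b \<otimes> a"
proof -
  define D where "D i = (derived G ^^ i) (carrier G)" for i
  have normal_D: "D i \<lhd> G" for i
    by (induction i) (simp_all add: D_def normal_self derived_is_normal)
  obtain n where "D n = {\<one>}"
    using assms(1) solvable_iff_trivial_derived_seq D_def by auto
  moreover have "D 0 \<noteq> {\<one>}" using assms(2) by (simp add: D_def)
  ultimately obtain j where "\<forall>i\<le>j. D i \<noteq> {\<one>}" and "D (Suc j) = {\<one>}"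
    using ex_least_nat_less[of "\<lambda>i. D i = {\<one>}" n] by blast
  then have "D j \<noteq> {\<one>}" and "D (Suc j) = {\<one>}" by simp_all
  moreover have "D (Suc j) = derived G (D j)" by (simp add: D_def)
  moreover have "D j \<subseteq> carrier G"
    using normal_D normal_imp_subgroup subgroup.subset by blast
  ultimately show thesis
    using that[OF normal_D] commute_if_derived_trivial[of "D j"] by metis
qed

definition centralizer :: "('a, 'b) monoid_scheme \<Rightarrow> 'a \<Rightarrow> 'a set" where
  "centralizer G g = {h \<in> carrier G. g \<otimes>\<^bsub>G\<^esub> h = h \<otimes>\<^bsub>G\<^esub> g}"

lemma (in group) conjugate_eq_iff_commute:
  assumes "g \<in> carrier G" and "h \<in> carrier G"
  shows "g \<otimes> h \<otimes> inv g = h \<longleftrightarrow> g \<otimes> h = h \<otimes> g"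
  using assms by (simp add: inv_solve_right')

lemma (in group) centralizer_eq_stabilizer:
  assumes "g \<in> carrier G"
  shows "centralizer G g = stabilizer G (\<lambda>h. \<lambda>x \<in> carrier G. h \<otimes> x \<otimes> inv h) g"
  using assms conjugate_eq_iff_commute by (auto simp: centralizer_def stabilizer_def)

lemma (in group) subgroup_centralizer:
  assumes "g \<in> carrier G"
  shows "subgroup (centralizer G g) G"
  unfolding centralizer_eq_stabilizer[OF assms]
  using group_action.stabilizer_subgroup[OF action_by_conjugation assms] .

lemma (in group) card_subgroup_dvd:
  assumes "subgroup H G" and "subgroup K G" and "K \<subseteq> H"
  shows "card K dvd card H"
proof -
  interpret H: group "G\<lparr>carrier := H\<rparr>"
    using assms(1) subgroup_imp_group by blast
  have "card (rcosets\<^bsub>G\<lparr>carrier := H\<rparr>\<^esub> K) * card K = card H"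
    using H.lagrange subgroup_incl[OF assms(2,1,3)] by (simp add: order_def)
  then show ?thesis by (metis dvd_triv_right)
qed

lemma (in group_action) conjugate_apply:
  assumes "h \<in> carrier G" and "a \<in> carrier G" and "x \<in> E"
  shows "\<phi> (h \<otimes> a \<otimes> inv h) (\<phi> h x) = \<phi> h (\<phi> a x)"
proof -
  interpret group G
    using group_hom group_hom.axioms(1) by blast
  have "\<phi> (inv h) (\<phi> h x) = x" using assms orbit_sym_aux by blast
  moreover have "\<phi> h x \<in> E" "\<phi> a x \<in> E" using assms element_image by blast+
  ultimately show ?thesis
    using assms by (simp add: composition_rule)
qed

lemma (in faithful_action) eq_one_if_acts_trivially:
  assumes "a \<in> carrier G" and "\<And>x. x \<in> E \<Longrightarrow> \<phi> a x = x"
  shows "a = \<one>"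
proof -
  interpret group G
    using group_hom group_hom.axioms(1) by blast
  have "\<phi> a \<in> extensional E"
    using bij_prop0[OF assms(1)] by (simp add: Bij_def)
  then have "\<phi> a = (\<lambda>x \<in> E. x)"
    using assms(2) by (simp add: extensionalityI)
  then have "\<phi> a = \<phi> \<one>" by (simp add: id_eq_one)
  then show ?thesis
    using faithful assms(1) by (simp add: inj_on_eq_iff)
qed

lemma (in faithful_action) normal_subgroup_in_stabilizer_trivial:
  assumes "x \<in> E" and "orbit G \<phi> x = E"
    and "A \<lhd> G" and "A \<subseteq> stabilizer G \<phi> x"
  shows "A = {\<one>}"
proof -
  interpret group G
    using group_hom group_hom.axioms(1) by blast
  interpret A: normal A G using assms(3) .
  have "\<phi> a y = y" if "a \<in> A" and "y \<in> E" for a y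
  proof -
    obtain h where h: "h \<in> carrier G" and y: "y = \<phi> h x"
      using \<open>y \<in> E\<close> assms(2) by (auto simp: orbit_def)
    have "inv h \<otimes> a \<otimes> h \<in> A"
      using A.inv_op_closed1 h \<open>a \<in> A\<close> by blast
    then have fix_x: "\<phi> (inv h \<otimes> a \<otimes> h) x = x"
      using assms(4) by (auto simp: stabilizer_def)
    have a: "a = h \<otimes> (inv h \<otimes> a \<otimes> h) \<otimes> inv h"
      using h \<open>a \<in> A\<close> by (simp add: conjugation_is_surj)
    show ?thesis
      unfolding y by (subst a) (simp add: conjugate_apply h assms(1) fix_x \<open>a \<in> A\<close>)
  qed
  then have "a = \<one>" if "a \<in> A" for a
    using that A.subset by (intro eq_one_if_acts_trivially) auto
  then show ?thesis
    using A.one_closed by blast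
qed

lemma (in faithful_action) normal_subgroup_transitive_if_stabilizer_maximal:
  assumes "x \<in> E" and "orbit G \<phi> x = E"
    and "maximal_subgroup (stabilizer G \<phi> x) G"
    and "A \<lhd> G" and "A \<noteq> {\<one>}"
  shows "orbit (G\<lparr>carrier := A\<rparr>) \<phi> x = E"
proof -
  interpret group G
    using group_hom group_hom.axioms(1) by blast
  interpret A: normal A G using assms(4) .
  let ?S = "stabilizer G \<phi> x"
  have S: "subgroup ?S G"
    using stabilizer_subgroup assms(1) .
  have A_sub: "A \<subseteq> A <#> ?S"
    using subgroup.subset[OF normal_imp_subgroup[OF normal_in_normal_set_mult[OF assms(4) S]]]
    by simp
  have S_sub: "?S \<subseteq> A <#> ?S"
    using subgroup.subset[OF subgroup_of_normal_set_mult[OF assms(4) S]] by simp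
  have "subgroup (A <#> ?S) G"
    using mult_norm_subgroup assms(4) S .
  with S_sub assms(3) have "A <#> ?S = ?S \<or> A <#> ?S = carrier G"
    unfolding maximal_subgroup_def by blast
  moreover have "A <#> ?S \<noteq> ?S"
    using A_sub normal_subgroup_in_stabilizer_trivial[OF assms(1,2,4)] assms(5) by auto
  ultimately have "A <#> ?S = carrier G" by blast
  have "y \<in> orbit (G\<lparr>carrier := A\<rparr>) \<phi> x" if "y \<in> E" for y
  proof -
    obtain h where h: "h \<in> carrier G" and y: "y = \<phi> h x"
      using \<open>y \<in> E\<close> assms(2) by (auto simp: orbit_def)
    then have "h \<in> A <#> ?S"
      using \<open>A <#> ?S = carrier G\<close> by simp
    then obtain a s where a: "a \<in> A" and s: "s \<in> ?S" and "h = a \<otimes> s"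
      unfolding set_mult_def by blast
    then have "\<phi> h x = \<phi> a (\<phi> s x)"
      using assms(1) a s A.subset stabilizer_subset by (blast intro: composition_rule)
    then have "y = \<phi> a x"
      using y s by (simp add: stabilizer_def)
    then show ?thesis
      using \<open>a \<in> A\<close> by (auto simp: orbit_def)
  qed
  moreover have "orbit (G\<lparr>carrier := A\<rparr>) \<phi> x \<subseteq> E"
    using A.subset assms(1) element_image by (auto simp: orbit_def)
  ultimately show ?thesis by blast
qed

lemma (in faithful_action) orbit_map_bij_betw_if_abelian:
  assumes "subgroup A G" and "\<And>a b. a \<in> A \<Longrightarrow> b \<in> A \<Longrightarrow> a \<otimes> b = b \<otimes> a"
    and "x \<in> E" and "orbit (G\<lparr>carrier := A\<rparr>) \<phi> x = E"
  shows "bij_betw (\<lambda>a. \<phi> a x) A E"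
proof -
  interpret group G
    using group_hom group_hom.axioms(1) by blast
  interpret A: subgroup A G using assms(1) .
  have orbit_A: "E = (\<lambda>a. \<phi> a x) ` A"
    using assms(4) by (auto simp: orbit_def)
  have semiregular: "c = \<one>" if c: "c \<in> A" and fix_x: "\<phi> c x = x" for c
  proof (rule eq_one_if_acts_trivially)
    show "c \<in> carrier G" using c by (rule A.mem_carrier)
  next
    fix y assume "y \<in> E"
    then obtain d where d: "d \<in> A" and y: "y = \<phi> d x"
      using orbit_A by blast
    have "\<phi> c y = \<phi> (c \<otimes> d) x"
      using c d y assms(3) by (simp add: composition_rule)
    also have "\<dots> = \<phi> (d \<otimes> c) x"
      using c d assms(2) by simp
    also have "\<dots> = y"
      using c d y fix_x assms(3) by (simp add: composition_rule)
    finally show "\<phi> c y = y" .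
  qed
  have "inj_on (\<lambda>a. \<phi> a x) A"
  proof (rule inj_onI)
    fix a b assume a: "a \<in> A" and b: "b \<in> A" and eq: "\<phi> a x = \<phi> b x"
    have "\<phi> (inv b \<otimes> a) x = \<phi> (inv b) (\<phi> b x)"
      using a b eq assms(3) by (simp add: composition_rule)
    also have "\<dots> = x"
      using orbit_sym_aux[OF A.mem_carrier[OF b] assms(3) refl] .
    finally have "inv b \<otimes> a = \<one>"
      by (intro semiregular) (simp_all add: a b A.m_closed A.m_inv_closed)
    then show "a = b"
      using inv_solve_left'[of \<one> b a] A.mem_carrier[OF a] A.mem_carrier[OF b] by simp
  qed
  then show ?thesis
    using orbit_A by (simp add: bij_betw_def)
qed

lemma (in group_action) invariants_eq_image_centralizer:
  assumes "A \<lhd> G" and "bij_betw (\<lambda>a. \<phi> a x) A E" and "x \<in> E"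
    and "g \<in> carrier G" and "\<phi> g x = x"
  shows "invariants E \<phi> g = (\<lambda>a. \<phi> a x) ` (A \<inter> centralizer G g)"
proof -
  interpret group G
    using group_hom group_hom.axioms(1) by blast
  interpret A: normal A G using assms(1) .
  have fixed_iff: "\<phi> g (\<phi> a x) = \<phi> a x \<longleftrightarrow> a \<in> centralizer G g" if a: "a \<in> A" for a
  proof -
    have conj: "g \<otimes> a \<otimes> inv g \<in> A"
      using A.inv_op_closed2 assms(4) a by blast
    have "\<phi> g (\<phi> a x) = \<phi> (g \<otimes> a \<otimes> inv g) x"
      using conjugate_apply[of g a x] assms(3-5) a by simp
    then have "\<phi> g (\<phi> a x) = \<phi> a x \<longleftrightarrow> g \<otimes> a \<otimes> inv g = a"
      using inj_on_eq_iff[OF bij_betw_imp_inj_on[OF assms(2)] conj a] by simp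
    also have "\<dots> \<longleftrightarrow> a \<in> centralizer G g"
      using conjugate_eq_iff_commute assms(4) a by (simp add: centralizer_def)
    finally show ?thesis .
  qed
  have "invariants E \<phi> g = {y \<in> (\<lambda>a. \<phi> a x) ` A. \<phi> g y = y}"
    using assms(2) by (simp add: bij_betw_def invariants_def)
  also have "\<dots> = (\<lambda>a. \<phi> a x) ` {a \<in> A. \<phi> g (\<phi> a x) = \<phi> a x}"
    by blast
  also have "\<dots> = (\<lambda>a. \<phi> a x) ` (A \<inter> centralizer G g)"
    using fixed_iff by blast
  finally show ?thesis .
qed

lemma (in group_action) card_invariants_dvd:
  assumes "A \<lhd> G" and "bij_betw (\<lambda>a. \<phi> a x) A E" and "x \<in> E"
    and "g \<in> carrier G" and "\<phi> g x = x"
  shows "card (invariants E \<phi> g) dvd card E"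
proof -
  interpret group G
    using group_hom group_hom.axioms(1) by blast
  have A: "subgroup A G"
    using assms(1) normal_imp_subgroup by blast
  have "card (invariants E \<phi> g) = card (A \<inter> centralizer G g)"
    using invariants_eq_image_centralizer[OF assms] bij_betw_imp_inj_on[OF assms(2)]
    by (simp add: card_image inj_on_Int)
  also have "\<dots> dvd card A"
    using card_subgroup_dvd A subgroups_Inter_pair[OF A subgroup_centralizer[OF assms(4)]]
    by blast
  also have "card A = card E"
    using bij_betw_same_card[OF assms(2)] .
  finally show ?thesis .
qed

theorem (in faithful_action) card_invariants_le_if_primitive_solvable:
  assumes "prime p" and "finite E" and "card E = p ^ k"
    and "x \<in> E" and "orbit G \<phi> x = E"
    and "maximal_subgroup (stabilizer G \<phi> x) G" and "solvable G"
    and "g \<in> carrier G" and "g \<noteq> \<one>" and "\<phi> g x = x"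
  shows "card (invariants E \<phi> g) \<le> p ^ (k - 1)"
proof -
  interpret group G
    using group_hom group_hom.axioms(1) by blast
  have "carrier G \<noteq> {\<one>}"
    using assms(8,9) by blast
  then obtain A where A: "A \<lhd> G" "A \<noteq> {\<one>}"
    and abelian: "\<And>a b. a \<in> A \<Longrightarrow> b \<in> A \<Longrightarrow> a \<otimes> b = b \<otimes> a"
    using solvable_imp_abelian_normal_subgroup assms(7) by blast
  have "orbit (G\<lparr>carrier := A\<rparr>) \<phi> x = E"
    using normal_subgroup_transitive_if_stabilizer_maximal assms(4-6) A .
  then have "bij_betw (\<lambda>a. \<phi> a x) A E"
    using orbit_map_bij_betw_if_abelian normal_imp_subgroup[OF A(1)] abelian assms(4) by blast
  then have "card (invariants E \<phi> g) dvd p ^ k"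
    using card_invariants_dvd A(1) assms(3,4,8,10) by metis
  moreover have "invariants E \<phi> g \<noteq> E"
  proof
    assume "invariants E \<phi> g = E"
    then have "g = \<one>"
      using assms(8) by (intro eq_one_if_acts_trivially) (auto simp: invariants_def)
    with assms(9) show False ..
  qed
  then have "invariants E \<phi> g \<subset> E"
    by (auto simp: invariants_def)
  then have "card (invariants E \<phi> g) \<noteq> p ^ k"
    using psubset_card_mono[OF assms(2)] assms(3) by (metis less_irrefl)
  ultimately show ?thesis
    by (rule proper_dvd_prime_power_le[OF assms(1)])
qed

lemma faithful_action_perm_subgroup:
  assumes "subgroup H (BijGroup \<Omega>)"
  shows "faithful_action (perm_subgroup \<Omega> H) \<Omega> (\<lambda>g. g)"
proof -
  have "group (perm_subgroup \<Omega> H)"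
    unfolding perm_subgroup_def using subgroup.subgroup_is_group[OF assms group_BijGroup] .
  moreover have "(\<lambda>g. g) \<in> hom (perm_subgroup \<Omega> H) (BijGroup \<Omega>)"
    using subgroup.subset[OF assms] by (auto simp: hom_def perm_subgroup_def)
  ultimately show ?thesis
    by (simp add: faithful_action_def faithful_action_axioms_def group_action_def
        group_hom_def group_hom_axioms_def group_BijGroup)
qed

theorem proposition2p2:
  fixes p k :: nat and \<Omega> :: "'a set" and H :: "('a \<Rightarrow> 'a) set" and g :: "'a \<Rightarrow> 'a"
  assumes "prime p" and "k \<ge> 1"
    and "finite \<Omega>" and "card \<Omega> = p ^ k"
    and "subgroup H (BijGroup \<Omega>)"
    and "primitive \<Omega> H"
    and "solvable (perm_subgroup \<Omega> H)"
    and "g \<in> H" and "g \<noteq> \<one>\<^bsub>BijGroup \<Omega>\<^esub>"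
  shows "card {x \<in> \<Omega>. g x = x} \<le> p ^ (k - 1)"
proof -
  interpret faithful_action "perm_subgroup \<Omega> H" \<Omega> "\<lambda>g. g"
    using faithful_action_perm_subgroup assms(5) .
  have fixed_points: "{x \<in> \<Omega>. g x = x} = invariants \<Omega> (\<lambda>g. g) g"
    by (simp add: invariants_def)
  show ?thesis
  proof (cases "{x \<in> \<Omega>. g x = x} = {}")
    case True
    then show ?thesis by (simp only: card.empty)
  next
    case False
    then obtain x where x: "x \<in> \<Omega>" "g x = x" by blast
    have orbit: "orbit (perm_subgroup \<Omega> H) (\<lambda>g. g) x = \<Omega>"
    proof
      show "orbit (perm_subgroup \<Omega> H) (\<lambda>g. g) x \<subseteq> \<Omega>"
        using element_image x(1) by (auto simp: orbit_def)
      show "\<Omega> \<subseteq> orbit (perm_subgroup \<Omega> H) (\<lambda>g. g) x"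
        using assms(6) x(1) unfolding primitive_def orbit_def perm_subgroup_def by force
    qed
    have maximal: "maximal_subgroup (stabilizer (perm_subgroup \<Omega> H) (\<lambda>g. g) x) (perm_subgroup \<Omega> H)"
      using assms(6) x(1) by (simp add: primitive_def)
    show ?thesis
      unfolding fixed_points
      by (rule card_invariants_le_if_primitive_solvable[OF assms(1,3,4) x(1) orbit maximal assms(7)])
        (use assms(8,9) x(2) in \<open>simp_all add: perm_subgroup_def\<close>)
  qed
qed

end
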